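(* Let $\mathbf{A}$ and $\mathbf{B}$ be $\mathbf{K}$-objects and $f_1,f_2:\mathbf{A}\to\mathbf{B}$ distinct $\mathbf{K}$-morphisms. Then the natural transformations $\Phi f_1$ and $\Phi f_2$ from $\Phi\mathbf{B}$ to $\Phi\mathbf{A}$ are distinct; that is, $\Phi$ is faithful.
   Context: $\mathbf{T}$ is the category whose objects are pairs $(A,\mathcal{R})$ with $A$ a set and $\mathcal{R}$ a family of subsets of $A$, and whose morphisms $f:(A,\mathcal{R})\to(B,\mathcal{S})$ are maps $f:A\to B$ with $f^{-1}[S]\in\mathcal{R}$ for all $S\in\mathcal{S}$. Fix a simple graph with vertex set $V=\{v_1,\dots,v_6\}$ and edge set $\mathcal{G}$ (two-element subsets of $V$) with no non-identity automorphism. For a $\mathbf{T}$-object $(A,\mathcal{R})$ let $\Psi(A,\mathcal{R})=(\overline{A},\overline{\mathcal{R}})$ with $\overline{A}=A\sqcup V$ and $\overline{\mathcal{R}}$ consisting of $\{v_i\}$, $\overline{A}\setminus\{v_i\}$ ($i=1,\dots,6$), $G$, $\overline{A}\setminus G$ ($G\in\mathcal{G}$), and $\{v_1,v_2,v_3\}\cup R$, $\{v_4,v_5,v_6\}\cup(A\setminus R)$ ($R\in\mathcal{R}$). $\mathbf{K}$ is the full subcategory of $\mathbf{T}$ on the objects of the form $\Psi(A,\mathcal{R})$. For a $\mathbf{K}$-object $\mathbf{A}=(A,\mathcal{R})$ and a set $X$, let $\approx_{\mathbf{A}}$ be the equivalence on maps $A\to X$: $g_1\approx_{\mathbf{A}}g_2$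 iff $g_1=g_2$, or $g_1[A]=g_2[A]$ is a two-element set $\{x,x'\}$ and $g_1^{-1}[\{x\}]=g_2^{-1}[\{x'\}]\in\mathcal{R}$. The set functor $\Phi\mathbf{A}$ is $(\Phi\mathbf{A})X=\{g\,;\,g:A\to X\}/\!\approx_{\mathbf{A}}$, $((\Phi\mathbf{A})h)(g/\!\approx_{\mathbf{A}})=hg/\!\approx_{\mathbf{A}}$. For a $\mathbf{K}$-morphism $f:\mathbf{A}\to\mathbf{B}=(B,\mathcal{S})$, $\Phi f:\Phi\mathbf{B}\to\Phi\mathbf{A}$ is the natural transformation with $(\Phi f)_X(g/\!\approx_{\mathbf{B}})=gf/\!\approx_{\mathbf{A}}$ for $g:B\to X$. *)

theory Defs
  imports "HOL-Library.FuncSet"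
begin

text \<open>The fixed vertex set V = {v1,...,v6} is represented by the naturals 1..6.\<close>
definition Vset :: "nat set" where "Vset = {1..6}"

definition simple_graph_on_V :: "nat set set \<Rightarrow> bool" where
  "simple_graph_on_V G \<longleftrightarrow> (\<forall>e\<in>G. e \<subseteq> Vset \<and> card e = 2)"

definition is_automorphism :: "nat set set \<Rightarrow> (nat \<Rightarrow> nat) \<Rightarrow> bool" where
  "is_automorphism G \<pi> \<longleftrightarrow> bij_betw \<pi> Vset Vset \<and>
     (\<forall>u\<in>Vset. \<forall>v\<in>Vset. {u, v} \<in> G \<longleftrightarrow> {\<pi> u, \<pi> v} \<in> G)"

definition rigid :: "nat set set \<Rightarrow> bool" where
  "rigid G \<longleftrightarrow> (\<forall>\<pi>. is_automorphism G \<pi> \<longrightarrow> (\<forall>v\<in>Vset. \<pi> v = v))"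

definition T_obj :: "'a set \<Rightarrow> 'a set set \<Rightarrow> bool" where
  "T_obj A R \<longleftrightarrow> R \<subseteq> Pow A"

definition T_mor :: "'a set \<Rightarrow> 'a set set \<Rightarrow> 'b set \<Rightarrow> 'b set set \<Rightarrow> ('a \<Rightarrow> 'b) \<Rightarrow> bool" where
  "T_mor A R B S f \<longleftrightarrow> f \<in> A \<rightarrow> B \<and> (\<forall>s\<in>S. {x\<in>A. f x \<in> s} \<in> R)"

definition Psi_carrier :: "'a set \<Rightarrow> ('a + nat) set" where
  "Psi_carrier A = Inl ` A \<union> Inr ` Vset"

definition Psi_fam :: "nat set set \<Rightarrow> 'a set \<Rightarrow> 'a set set \<Rightarrow> ('a + nat) set set" where
  "Psi_fam G A R =
     (\<Union>i\<in>Vset. {{Inr i}, Psi_carrier A - {Inr i}})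
   \<union> (\<Union>e\<in>G. {Inr ` e, Psi_carrier A - Inr ` e})
   \<union> (\<Union>r\<in>R. {Inr ` {1,2,3} \<union> Inl ` r, Inr ` {4,5,6} \<union> Inl ` (A - r)})"

definition approx :: "'c set \<Rightarrow> 'c set set \<Rightarrow> ('c \<Rightarrow> 'x) \<Rightarrow> ('c \<Rightarrow> 'x) \<Rightarrow> bool" where
  "approx A R g1 g2 \<longleftrightarrow>
     (\<forall>a\<in>A. g1 a = g2 a) \<or>
     (g1 ` A = g2 ` A \<and>
      (\<exists>x x'. x \<noteq> x' \<and> g1 ` A = {x, x'} \<and>
              {a\<in>A. g1 a = x} = {a\<in>A. g2 a = x'} \<and> {a\<in>A. g1 a = x} \<in> R))"

definition Phi_obj :: "'c set \<Rightarrow> 'c set set \<Rightarrow> 'x set \<Rightarrow> ('c \<Rightarrow> 'x) set set" where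
  "Phi_obj A R X = (A \<rightarrow>\<^sub>E X) // {(g1, g2). g1 \<in> A \<rightarrow>\<^sub>E X \<and> g2 \<in> A \<rightarrow>\<^sub>E X \<and> approx A R g1 g2}"

definition Phi_class :: "'c set \<Rightarrow> 'c set set \<Rightarrow> 'x set \<Rightarrow> ('c \<Rightarrow> 'x) \<Rightarrow> ('c \<Rightarrow> 'x) set" where
  "Phi_class A R X g = {h \<in> A \<rightarrow>\<^sub>E X. approx A R h (restrict g A)}"

text \<open>Component at X of Phi f : Phi B \<rightarrow> Phi A, for f : (A,R) \<rightarrow> (B,S):
  the class of g (g : B \<rightarrow> X) is sent to the class of g \<circ> f.\<close>
definition Phi_mor_comp ::
  "'c set \<Rightarrow> 'c set set \<Rightarrow> ('c \<Rightarrow> 'd) \<Rightarrow> 'x set \<Rightarrow> ('d \<Rightarrow> 'x) \<Rightarrow> ('c \<Rightarrow> 'x) set" where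
  "Phi_mor_comp A R f X g = Phi_class A R X (g \<circ> f)"

end

theory Submission
  imports Defs
begin

text \<open>
  Evaluate both natural transformations at the identity map of the carrier of \<open>\<Psi> B\<close>.
  Every \<open>\<Psi>\<close>-family consists of nonempty sets and contains the singletons \<open>{v\<^sub>i}\<close>, so a
  \<open>\<Psi>\<close>-morphism hits all six vertices and the two composites have at least six values.
  But \<open>\<approx>\<close> only identifies distinct maps with exactly two values, so equal classes force
  \<open>f\<^sub>1 = f\<^sub>2\<close>.
\<close>

lemma approx_imp_eq_on_if_image_not_pair:
  assumes "approx A R g1 g2" and "\<nexists>x x'. g1 ` A \<subseteq> {x, x'}"
  shows "\<forall>a\<in>A. g1 a = g2 a"
proof -
  have "\<not> (\<exists>x x'. g1 ` A = {x, x'})"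
    using assms(2) by blast
  then show ?thesis
    using assms(1) unfolding approx_def by blast
qed

lemma Phi_class_eq_imp_eq_on:
  assumes "g1 \<in> A \<rightarrow> X" and "Phi_class A R X g1 = Phi_class A R X g2"
    and "\<nexists>x x'. g1 ` A \<subseteq> {x, x'}"
  shows "\<forall>a\<in>A. g1 a = g2 a"
proof -
  have "restrict g1 A \<in> Phi_class A R X g1"
    using assms(1) unfolding Phi_class_def approx_def by auto
  then have "approx A R (restrict g1 A) (restrict g2 A)"
    using assms(2) unfolding Phi_class_def by auto
  moreover have "\<nexists>x x'. restrict g1 A ` A \<subseteq> {x, x'}"
    using assms(3) by simp
  ultimately show ?thesis
    by (auto dest: approx_imp_eq_on_if_image_not_pair)
qed

lemma Psi_carrier_diff_vertices_nonempty:
  assumes "e \<subseteq> Vset" and "card e < 6"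
  shows "Psi_carrier A - Inr ` e \<noteq> {}"
proof -
  have "e \<noteq> Vset" using assms(2) by (auto simp: Vset_def)
  then obtain v where "v \<in> Vset" "v \<notin> e" using assms(1) by blast
  then have "Inr v \<in> Psi_carrier A - Inr ` e" by (auto simp: Psi_carrier_def)
  then show ?thesis by blast
qed

lemma Psi_fam_nonempty:
  assumes "simple_graph_on_V G" and "s \<in> Psi_fam G A R"
  shows "s \<noteq> {}"
proof -
  have vertex: "Psi_carrier A - {Inr i} \<noteq> {}" if "i \<in> Vset" for i
    using Psi_carrier_diff_vertices_nonempty[of "{i}" A] that by simp
  have edge: "e \<noteq> {}" "Psi_carrier A - Inr ` e \<noteq> {}" if "e \<in> G" for e
    using assms(1) that Psi_carrier_diff_vertices_nonempty[of e A]
    unfolding simple_graph_on_V_def by fastforce+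
  show ?thesis
    using assms(2) vertex edge unfolding Psi_fam_def by blast
qed

lemma Psi_mor_hits_vertices:
  assumes "simple_graph_on_V G"
    and "T_mor (Psi_carrier A) (Psi_fam G A R) (Psi_carrier B) (Psi_fam G B S) f"
    and "i \<in> Vset"
  shows "Inr i \<in> f ` Psi_carrier A"
proof -
  have "{Inr i} \<in> Psi_fam G B S"
    using assms(3) unfolding Psi_fam_def by blast
  then have "{a \<in> Psi_carrier A. f a \<in> {Inr i}} \<in> Psi_fam G A R"
    using assms(2) unfolding T_mor_def by blast
  from Psi_fam_nonempty[OF assms(1) this] show ?thesis
    by (force simp: image_iff)
qed

lemma Psi_mor_image_not_pair:
  assumes "simple_graph_on_V G"
    and "T_mor (Psi_carrier A) (Psi_fam G A R) (Psi_carrier B) (Psi_fam G B S) f"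
  shows "\<nexists>x x'. f ` Psi_carrier A \<subseteq> {x, x'}"
proof (intro notI, elim exE)
  fix x x' assume "f ` Psi_carrier A \<subseteq> {x, x'}"
  then have "Inr i \<in> {x, x'}" if "i \<in> Vset" for i
    using Psi_mor_hits_vertices[OF assms that] by blast
  then have "Inr 1 \<in> {x, x'}" "Inr 2 \<in> {x, x'}" "Inr 3 \<in> {x, x'}"
    by (simp_all only: Vset_def atLeastAtMost_iff) simp_all
  then show False
    by auto
qed

lemma Phi_mor_comp_restrict_id:
  assumes "f \<in> A \<rightarrow> B"
  shows "Phi_mor_comp A R f B (restrict id B) = Phi_class A R B f"
proof -
  have "restrict (restrict id B \<circ> f) A = restrict f A"
    using assms by (intro restrict_ext) auto
  then show ?thesis
    unfolding Phi_mor_comp_def Phi_class_def by simp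
qed

theorem lemma3p5:
  fixes G :: "nat set set"
    and A :: "'a set" and R :: "'a set set"
    and B :: "'b set" and S :: "'b set set"
    and f1 f2 :: "'a + nat \<Rightarrow> 'b + nat"
  assumes "simple_graph_on_V G" and "rigid G"
    and "T_obj A R" and "T_obj B S"
    and "T_mor (Psi_carrier A) (Psi_fam G A R) (Psi_carrier B) (Psi_fam G B S) f1"
    and "T_mor (Psi_carrier A) (Psi_fam G A R) (Psi_carrier B) (Psi_fam G B S) f2"
    and "\<exists>x\<in>Psi_carrier A. f1 x \<noteq> f2 x"
  shows "\<exists>(X :: ('b + nat) set) g. g \<in> Psi_carrier B \<rightarrow>\<^sub>E X \<and>
           Phi_mor_comp (Psi_carrier A) (Psi_fam G A R) f1 X g \<noteq>
           Phi_mor_comp (Psi_carrier A) (Psi_fam G A R) f2 X g"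
proof -
  let ?A = "Psi_carrier A" and ?B = "Psi_carrier B" and ?F = "Psi_fam G A R"
  have maps: "f1 \<in> ?A \<rightarrow> ?B" "f2 \<in> ?A \<rightarrow> ?B"
    using assms(5,6) unfolding T_mor_def by blast+
  have "Phi_class ?A ?F ?B f1 \<noteq> Phi_class ?A ?F ?B f2"
  proof
    assume "Phi_class ?A ?F ?B f1 = Phi_class ?A ?F ?B f2"
    from Phi_class_eq_imp_eq_on[OF maps(1) this Psi_mor_image_not_pair[OF assms(1,5)]]
    show False
      using assms(7) by blast
  qed
  then have "Phi_mor_comp ?A ?F f1 ?B (restrict id ?B) \<noteq> Phi_mor_comp ?A ?F f2 ?B (restrict id ?B)"
    by (simp add: Phi_mor_comp_restrict_id maps)
  moreover have "restrict id ?B \<in> ?B \<rightarrow>\<^sub>E ?B"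
    by simp
  ultimately show ?thesis
    by blast
qed

end
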